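(* In the aggregated model, let $\alpha\in(-1/2,0)$ and $\beta>1$, suppose $\varphi\sim\mathrm{Beta}(-\alpha,1+\alpha)$ on $[0,1]$ and $\mathrm E[\psi\mid\varphi]=(1-\varphi)^\beta$. Then for $|x|<1$, $\mathrm E\big[\frac{1}{1-x\varphi}\big]=(1-x)^{\alpha}$ and $\mathrm E\big[\frac{(1-\varphi)^\beta}{1-x\varphi}\big]=\frac{\Gamma(1+\alpha+\beta)}{\Gamma(1+\alpha)\Gamma(1+\beta)}F(1,-\alpha;1+\beta;x)$, so that the moving-average coefficients $\tilde\beta_k$ of $\bar X_t=\mathrm E[c]\sum_k\tilde\beta_k\varepsilon_{t-k}$ satisfy $$\sum_{k=0}^\infty\tilde\beta_kx^k=\frac{(1-x)^\alpha}{1-\frac{\Gamma(1+\alpha+\beta)}{\Gamma(1+\alpha)\Gamma(1+\beta)}\,x\,F(1,-\alpha;1+\beta;x)},$$ and the spectral density of $\bar X_t$ is $$f_X(\lambda)=\frac{\mathrm E[c]^2\sigma_\varepsilon^2}{2\pi}\,\frac{|1-e^{-i\lambda}|^{2\alpha}}{\big|1-\frac{\Gamma(1+\alpha+\beta)}{\Gamma(1+\alpha)\Gamma(1+\beta)}e^{-i\lambda}F(1,-\alpha;1+\beta;e^{-i\lambda})\big|^2}.$$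
   Context: $F(a,b;c;x)$ denotes the Gauss hypergeometric function. The aggregated model: $\hat X_{i,t}=\varphi_i\hat X_{i,t-1}+\psi_i\bar X_{n,t-1}+c_i\varepsilon_t+\eta_{i,t}$, $\bar X_{n,t}=\frac1n\sum_i\hat X_{i,t}$, with $(\varphi_i,\psi_i)$ i.i.d. copies of $(\varphi,\psi)$, $c_i>0$ i.i.d. copies of $c$ independent of $(\varphi,\psi)$, and independent centered Gaussian white noises $\varepsilon_t$ (variance $\sigma_\varepsilon^2$) and $\eta_{i,t}$. The limit $\bar X_t=\lim_n\bar X_{n,t}$ equals $\mathrm E[c]\sum_k\tilde\beta_k\varepsilon_{t-k}$ with $\sum_k\tilde\beta_kx^k=\mathrm E[\frac{1}{1-x\varphi}]\big(1-x\mathrm E[\frac{\psi}{1-x\varphi}]\big)^{-1}$. *)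

theory Defs
  imports "HOL-Probability.Probability"
begin

definition beta_density :: "real \<Rightarrow> real \<Rightarrow> real \<Rightarrow> real" where
  "beta_density a b t =
     (if 0 < t \<and> t < 1 then t powr (a - 1) * (1 - t) powr (b - 1) / Beta a b else 0)"

definition hyp2f1 :: "real \<Rightarrow> real \<Rightarrow> real \<Rightarrow> complex \<Rightarrow> complex" where
  "hyp2f1 a b c z =
     (\<Sum>n. complex_of_real (pochhammer a n * pochhammer b n / (pochhammer c n * fact n)) * z ^ n)"

text \<open>Autocovariance at lag h of the linear process  X_t = m * sum_k b_k eps_(t-k),
  where eps is a centered white noise with variance s2:
  Cov(X_(t+h), X_t) = m^2 * s2 * sum_k b_k b_(k+|h|).\<close>
definition ma_autocov :: "real \<Rightarrow> real \<Rightarrow> (nat \<Rightarrow> real) \<Rightarrow> int \<Rightarrow> real" where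
  "ma_autocov m s2 b h = m\<^sup>2 * s2 * (\<Sum>k. b k * b (k + nat \<bar>h\<bar>))"

definition is_spectral_density :: "(int \<Rightarrow> real) \<Rightarrow> (real \<Rightarrow> real) \<Rightarrow> bool" where
  "is_spectral_density gam f \<longleftrightarrow>
     set_integrable lborel {-pi..pi} f \<and>
     (\<forall>h::int. complex_of_real (gam h) =
        set_lebesgue_integral lborel {-pi..pi}
          (\<lambda>l. exp (\<i> * of_int h * of_real l) * complex_of_real (f l)))"

end

theory Submission
  imports Defs
begin

text \<open>
  For \<open>phi \<sim> Beta(a, b)\<close> the moments \<open>E[phi^k (1 - phi)^g] = B(k + a, b + g) / B(a, b)\<close> are
  hypergeometric coefficients, so expanding \<open>1 / (1 - x phi)\<close> geometrically turns
  \<open>E[(1 - phi)^g / (1 - x phi)]\<close> into a multiple of \<open>F(1, a; a + b + g; x)\<close>; for \<open>g = 0\<close> and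
  \<open>a + b = 1\<close> this is the binomial series of \<open>(1 - x)^(-a)\<close>. Conditioning on \<open>phi\<close> replaces
  \<open>psi\<close> by \<open>(1 - phi)^beta\<close>, and since \<open>beta > 1\<close> the moment series sums to at most
  \<open>E[(1 - phi)^(beta - 1)] < 1\<close>, so the autoregressive denominator stays away from 0 on the
  closed unit disc.

  The spectral density follows by Abel summation. For \<open>r < 1\<close> the coefficients \<open>b_k r^k\<close>
  are absolutely summable and Parseval's identity holds; as \<open>r \<rightarrow> 1\<close> the integrands are
  dominated by a multiple of \<open>|l|^(2 alpha)\<close>, integrable because \<open>alpha > -1/2\<close>, and the
  same bound at lag 0 shows that \<open>b\<close> is square summable, which makes
  \<open>\<Sum>k. b_k b_(k+h) r^(2k+h)\<close> continuous up to \<open>r = 1\<close>.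
\<close>

lemma hyp2f1_one_left:
  "hyp2f1 1 a c z = (\<Sum>n. complex_of_real (pochhammer a n / pochhammer c n) * z ^ n)"
  by (simp add: hyp2f1_def flip: pochhammer_fact)

lemma hyp2f1_one_a_one:
  assumes z: "norm z < 1"
  shows "hyp2f1 1 a 1 z = (1 - z) powr complex_of_real (- a)"
proof -
  have "(complex_of_real (- a) gchoose n) * (- z) ^ n
      = complex_of_real (pochhammer a n / pochhammer 1 n) * z ^ n" for n
  proof -
    have "(complex_of_real (- a) gchoose n) * (- z) ^ n
        = ((- 1) ^ n * (- 1) ^ n) * pochhammer (complex_of_real a) n / fact n * z ^ n"
      by (simp add: gbinomial_pochhammer power_minus[of z])
    also have "(- 1 :: complex) ^ n * (- 1) ^ n = 1"
      by (simp flip: power_add)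
    finally show ?thesis
      by (simp add: pochhammer_of_real flip: pochhammer_fact)
  qed
  then have "(\<lambda>n. complex_of_real (pochhammer a n / pochhammer 1 n) * z ^ n) sums
      (1 - z) powr complex_of_real (- a)"
    using gen_binomial_complex[of "- z" "complex_of_real (- a)"] z by simp
  then show ?thesis
    unfolding hyp2f1_one_left by (rule sums_unique[symmetric])
qed

lemma norm_resolvent_le:
  fixes x :: complex and t :: real
  assumes x: "norm x < 1" and t: "0 \<le> t" "t \<le> 1"
  shows "norm (1 / (1 - x * complex_of_real t)) \<le> 1 / (1 - norm x)"
proof -
  have "norm (x * complex_of_real t) \<le> norm x"
    using t by (simp add: norm_mult mult_left_le)
  then have "1 - norm x \<le> norm (1 - x * complex_of_real t)"
    using norm_triangle_ineq2[of 1 "x * complex_of_real t"] by simp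
  then show ?thesis
    using x by (simp add: norm_divide divide_simps)
qed

lemma (in finite_measure) finite_measure_subalgebra_vimage:
  assumes X: "X \<in> measurable M N"
  shows "finite_measure_subalgebra M (vimage_algebra (space M) X N)"
proof
  have "sets (vimage_algebra (space M) X N) = {X -` A \<inter> space M | A. A \<in> sets N}"
    using measurable_space[OF X] by (intro sets_vimage_algebra2) auto
  also have "\<dots> \<subseteq> sets M"
    using X by (auto intro: measurable_sets)
  finally show "subalgebra M (vimage_algebra (space M) X N)"
    by (simp add: subalgebra_def)
qed

lemma (in finite_measure) integral_mult_real_cond_exp_vimage:
  fixes X Y :: "'a \<Rightarrow> real" and g h :: "real \<Rightarrow> real"
  assumes [measurable]: "X \<in> borel_measurable M" "Y \<in> borel_measurable M"
      "g \<in> borel_measurable borel" "h \<in> borel_measurable borel"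
    and Y: "integrable M Y"
    and cond: "AE \<omega> in M. real_cond_exp M (vimage_algebra (space M) X borel) Y \<omega> = g (X \<omega>)"
    and h: "AE \<omega> in M. \<bar>h (X \<omega>)\<bar> \<le> C"
  shows "(\<integral>\<omega>. h (X \<omega>) * Y \<omega> \<partial>M) = (\<integral>\<omega>. h (X \<omega>) * g (X \<omega>) \<partial>M)"
proof -
  define F where "F = vimage_algebra (space M) X borel"
  interpret F: finite_measure_subalgebra M F
    unfolding F_def by (rule finite_measure_subalgebra_vimage) simp
  have hX_F: "(\<lambda>\<omega>. h (X \<omega>)) \<in> borel_measurable F"
    unfolding F_def by (rule measurable_compose[OF measurable_vimage_algebra1]) simp_all
  have "integrable M (\<lambda>\<omega>. h (X \<omega>) * Y \<omega>)"
  proof (rule Bochner_Integration.integrable_bound[OF integrable_mult_right[OF Y, of C]])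
    show "AE \<omega> in M. norm (h (X \<omega>) * Y \<omega>) \<le> norm (C * Y \<omega>)"
      using h by eventually_elim (auto simp: abs_mult intro: mult_right_mono)
  qed measurable
  then have "(\<integral>\<omega>. h (X \<omega>) * Y \<omega> \<partial>M) = (\<integral>\<omega>. h (X \<omega>) * real_cond_exp M F Y \<omega> \<partial>M)"
    by (rule F.real_cond_exp_intg(2)[OF _ hX_F, symmetric]) simp
  also have "\<dots> = (\<integral>\<omega>. h (X \<omega>) * g (X \<omega>) \<partial>M)"
    by (rule integral_cong_AE) (use cond in \<open>auto simp: F_def elim!: eventually_mono\<close>)
  finally show ?thesis .
qed

lemma (in finite_measure) integral_mult_cond_exp_vimage_complex:
  fixes X Y :: "'a \<Rightarrow> real" and g :: "real \<Rightarrow> real" and h :: "real \<Rightarrow> complex"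
  assumes [measurable]: "X \<in> borel_measurable M" "Y \<in> borel_measurable M"
      "g \<in> borel_measurable borel" "h \<in> borel_measurable borel"
    and Y: "integrable M Y"
    and cond: "AE \<omega> in M. real_cond_exp M (vimage_algebra (space M) X borel) Y \<omega> = g (X \<omega>)"
    and h: "AE \<omega> in M. norm (h (X \<omega>)) \<le> C"
  shows "(\<integral>\<omega>. complex_of_real (Y \<omega>) * h (X \<omega>) \<partial>M)
       = (\<integral>\<omega>. complex_of_real (g (X \<omega>)) * h (X \<omega>) \<partial>M)"
proof -
  interpret F: finite_measure_subalgebra M "vimage_algebra (space M) X borel"
    by (rule finite_measure_subalgebra_vimage) simp
  have "integrable M (\<lambda>\<omega>. g (X \<omega>))"
    by (rule integrable_cong_AE_imp[OF F.real_cond_exp_int(1)[OF Y] _ cond]) measurable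
  moreover have "integrable M (\<lambda>\<omega>. complex_of_real (Z \<omega>) * h (X \<omega>))"
    if Z: "integrable M Z" "Z \<in> borel_measurable M" for Z
  proof (rule Bochner_Integration.integrable_bound[OF integrable_mult_right[OF Z(1), of C]])
    show "AE \<omega> in M. norm (complex_of_real (Z \<omega>) * h (X \<omega>)) \<le> norm (C * Z \<omega>)"
      using h
    proof eventually_elim
      case (elim \<omega>)
      then have "\<bar>Z \<omega>\<bar> * norm (h (X \<omega>)) \<le> \<bar>Z \<omega>\<bar> * \<bar>C\<bar>"
        by (intro mult_left_mono) auto
      then show ?case
        by (simp add: norm_mult abs_mult mult.commute)
    qed
  qed (use Z in measurable)
  ultimately have int: "integrable M (\<lambda>\<omega>. complex_of_real (Y \<omega>) * h (X \<omega>))"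
    "integrable M (\<lambda>\<omega>. complex_of_real (g (X \<omega>)) * h (X \<omega>))"
    using Y by simp_all
  have "(\<integral>\<omega>. q (h (X \<omega>)) * Y \<omega> \<partial>M) = (\<integral>\<omega>. q (h (X \<omega>)) * g (X \<omega>) \<partial>M)"
    if "q = Re \<or> q = Im" for q
    using that h
    by (intro integral_mult_real_cond_exp_vimage[OF _ _ _ _ Y cond, of _ C])
       (auto elim!: eventually_mono intro: abs_Re_le_cmod abs_Im_le_cmod order_trans)
  then show ?thesis
    using integral_Re[OF int(1)] integral_Re[OF int(2)] integral_Im[OF int(1)] integral_Im[OF int(2)]
    by (intro complex_eqI) (simp_all add: mult.commute)
qed

section \<open>Beta-distributed autoregressive coefficient\<close>

locale beta_variable = prob_space M for M :: "'a measure" +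
  fixes phi :: "'a \<Rightarrow> real" and a b :: real
  assumes shape_pos: "0 < a" "0 < b"
    and phi_measurable [measurable]: "phi \<in> borel_measurable M"
    and phi_distributed: "distributed M lborel phi (\<lambda>t. ennreal (beta_density a b t))"
begin

lemma Beta_shape_pos: "0 < Beta a b"
  using shape_pos by (simp add: Beta_def)

lemma AE_phi_in_unit_interval: "AE \<omega> in M. 0 < phi \<omega> \<and> phi \<omega> < 1"
proof -
  have "AE t in density lborel (\<lambda>t. ennreal (beta_density a b t)). 0 < t \<and> t < 1"
    by (subst AE_density[OF distributed_borel_measurable[OF phi_distributed]])
       (auto simp: beta_density_def)
  then have "AE t in distr M lborel phi. 0 < t \<and> t < 1"
    by (simp only: distributed_distr_eq_density[OF phi_distributed])
  from AE_distrD[OF _ this] show ?thesis by simp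
qed

definition beta_moment :: "nat \<Rightarrow> real \<Rightarrow> real" where
  "beta_moment k g = Beta (real k + a) (b + g) / Beta a b"

lemma beta_moment_pos: "0 < b + g \<Longrightarrow> 0 < beta_moment k g"
  using shape_pos Beta_shape_pos by (simp add: beta_moment_def Beta_def)

lemma beta_moment_eq_pochhammer:
  assumes g: "0 < b + g"
  shows "beta_moment k g = beta_moment 0 g * pochhammer a k / pochhammer (a + b + g) k"
proof -
  have not_pole: "a \<notin> \<int>\<^sub>\<le>\<^sub>0" "a + b + g \<notin> \<int>\<^sub>\<le>\<^sub>0"
    using shape_pos g by (auto elim!: nonpos_Ints_cases)
  have "0 < Gamma a" "0 < Gamma (a + b + g)"
    using shape_pos g by simp_all
  then have "Gamma (real k + a) = Gamma a * pochhammer a k"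
    "Gamma (real k + a + (b + g)) = Gamma (a + b + g) * pochhammer (a + b + g) k"
    using pochhammer_Gamma[OF not_pole(1), of k] pochhammer_Gamma[OF not_pole(2), of k]
    by (simp_all add: field_simps)
  moreover have "0 < pochhammer (a + b + g) k"
    using shape_pos g by (intro pochhammer_pos) simp
  ultimately show ?thesis
    using shape_pos g by (simp add: beta_moment_def Beta_def field_simps)
qed

lemma integral_beta_moment:
  assumes g: "0 < b + g"
  shows "(\<integral>\<omega>. phi \<omega> ^ k * (1 - phi \<omega>) powr g \<partial>M) = beta_moment k g"
proof -
  define h where "h t = t powr ((real k + a) - 1) * (1 - t) powr ((b + g) - 1)" for t
  have density: "beta_density a b t * (t ^ k * (1 - t) powr g)
      = indicator {0<..<1} t * h t / Beta a b" for t
  proof (cases "0 < t \<and> t < 1")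
    case True
    have "t powr (a - 1) * t ^ k = t powr ((real k + a) - 1)"
      using True by (simp add: powr_realpow[symmetric] powr_add[symmetric] algebra_simps)
    moreover have "(1 - t) powr (b - 1) * (1 - t) powr g = (1 - t) powr ((b + g) - 1)"
      using True by (simp add: powr_add[symmetric] algebra_simps)
    ultimately show ?thesis
      using True by (simp add: beta_density_def h_def mult_ac)
  qed (auto simp: beta_density_def)
  have "(\<integral>\<omega>. phi \<omega> ^ k * (1 - phi \<omega>) powr g \<partial>M)
      = (\<integral>t. beta_density a b t * (t ^ k * (1 - t) powr g) \<partial>lborel)"
    by (rule distributed_integral[OF phi_distributed, symmetric])
       (use Beta_shape_pos shape_pos in \<open>auto simp: beta_density_def\<close>)
  also have "\<dots> = (LINT t:{0<..<1}|lborel. h t) / Beta a b"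
    by (simp add: density set_lebesgue_integral_def)
  also have "(LINT t:{0<..<1}|lborel. h t) = Beta (real k + a) (b + g)"
  proof -
    have "set_integrable lborel {0..1} h"
      unfolding h_def by (rule integrable_Beta) (use shape_pos g in auto)
    then have "set_integrable lborel {0<..<1} h"
      by (rule set_integrable_subset) auto
    then have "(LINT t:{0<..<1}|lborel. h t) = integral {0<..<1} h"
      by (rule set_borel_integral_eq_integral)
    also have "\<dots> = Beta (real k + a) (b + g)"
      unfolding h_def using shape_pos g
      by (intro integral_unique) (simp add: has_integral_Icc_iff_Ioo[symmetric] has_integral_Beta_real)
    finally show ?thesis .
  qed
  finally show ?thesis by (simp add: beta_moment_def)
qed

lemma integral_resolvent_sums:
  assumes g: "0 \<le> g" and x: "norm x < 1"
  shows "(\<lambda>k. complex_of_real (beta_moment k g) * x ^ k) sums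
     (\<integral>\<omega>. complex_of_real ((1 - phi \<omega>) powr g) / (1 - x * complex_of_real (phi \<omega>)) \<partial>M)"
proof -
  define f where "f k \<omega> = complex_of_real (phi \<omega> ^ k * (1 - phi \<omega>) powr g) * x ^ k" for k \<omega>
  have [measurable]: "f k \<in> borel_measurable M" for k
    unfolding f_def by measurable
  have f_bound: "AE \<omega> in M. norm (f k \<omega>) \<le> norm x ^ k" for k
    using AE_phi_in_unit_interval
  proof eventually_elim
    case (elim \<omega>)
    have "norm (f k \<omega>) = phi \<omega> ^ k * (1 - phi \<omega>) powr g * norm x ^ k"
      using elim by (simp add: f_def norm_mult norm_power)
    also have "\<dots> \<le> norm x ^ k"
      using elim g by (intro mult_left_le_one_le mult_le_one) (auto simp: power_le_one powr_le1)
    finally show ?case .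
  qed
  have f_integrable: "integrable M (f k)" for k
    by (rule integrable_const_bound[OF f_bound]) (simp add: f_def)
  have "AE \<omega> in M. summable (\<lambda>k. norm (f k \<omega>))"
    using AE_all_countable[THEN iffD2, OF allI[OF f_bound]]
    by eventually_elim (rule summable_comparison_test[OF _ summable_geometric], use x in auto)
  moreover have "summable (\<lambda>k. \<integral>\<omega>. norm (f k \<omega>) \<partial>M)"
  proof (rule summable_comparison_test[OF _ summable_geometric[of "norm x"]])
    have "(\<integral>\<omega>. norm (f k \<omega>) \<partial>M) \<le> (\<integral>\<omega>. norm x ^ k \<partial>M)" for k
      by (rule integral_mono_AE') (use f_bound[of k] in auto)
    then have "(\<integral>\<omega>. norm (f k \<omega>) \<partial>M) \<le> norm x ^ k" for k
      by (simp add: prob_space)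
    then show "\<exists>N. \<forall>k\<ge>N. norm (\<integral>\<omega>. norm (f k \<omega>) \<partial>M) \<le> norm x ^ k"
      by auto
  qed (use x in simp)
  ultimately have sums: "(\<lambda>k. integral\<^sup>L M (f k)) sums (\<integral>\<omega>. (\<Sum>k. f k \<omega>) \<partial>M)"
    by (rule sums_integral[OF f_integrable])
  have "integral\<^sup>L M (f k) = complex_of_real (beta_moment k g) * x ^ k" for k
    using integral_beta_moment[of g k] shape_pos g
    unfolding f_def integral_mult_left_zero integral_complex_of_real by simp
  moreover have "(\<integral>\<omega>. (\<Sum>k. f k \<omega>) \<partial>M)
      = (\<integral>\<omega>. complex_of_real ((1 - phi \<omega>) powr g) / (1 - x * complex_of_real (phi \<omega>)) \<partial>M)"
  proof (rule integral_cong_AE)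
    show "AE \<omega> in M. (\<Sum>k. f k \<omega>)
        = complex_of_real ((1 - phi \<omega>) powr g) / (1 - x * complex_of_real (phi \<omega>))"
      using AE_phi_in_unit_interval
    proof eventually_elim
      case (elim \<omega>)
      have "norm (x * complex_of_real (phi \<omega>)) \<le> norm x"
        using elim by (simp add: norm_mult mult_left_le)
      then have "norm (x * complex_of_real (phi \<omega>)) < 1"
        using x by linarith
      from sums_mult[OF geometric_sums[OF this], of "complex_of_real ((1 - phi \<omega>) powr g)"]
      show ?case
        by (simp add: f_def sums_iff power_mult_distrib mult_ac)
    qed
  qed measurable
  ultimately show ?thesis
    using sums by simp
qed

lemma beta_moment_series_eq_hyp2f1:
  assumes g: "0 \<le> g" and s: "(\<lambda>k. complex_of_real (beta_moment k g) * z ^ k) sums s"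
  shows "s = complex_of_real (beta_moment 0 g) * hyp2f1 1 a (a + b + g) z"
    (is "_ = ?C * _")
proof -
  define t where "t k = complex_of_real (pochhammer a k / pochhammer (a + b + g) k) * z ^ k" for k
  have C: "?C \<noteq> 0"
    using beta_moment_pos[of g 0] shape_pos g by simp
  have "complex_of_real (beta_moment k g) * z ^ k = ?C * t k" for k
    using beta_moment_eq_pochhammer[of g k] shape_pos g by (simp add: t_def)
  then have "(\<lambda>k. ?C * t k) sums (?C * (s / ?C))"
    using s C by simp
  then have "t sums (s / ?C)"
    by (rule sums_mult_iff[OF C, THEN iffD1])
  then have "hyp2f1 1 a (a + b + g) z = s / ?C"
    unfolding hyp2f1_one_left t_def[symmetric] by (rule sums_unique[symmetric])
  then show ?thesis
    using C by simp
qed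

lemma integral_resolvent_hyp2f1:
  assumes "0 \<le> g" and "norm x < 1"
  shows "(\<integral>\<omega>. complex_of_real ((1 - phi \<omega>) powr g) / (1 - x * complex_of_real (phi \<omega>)) \<partial>M)
      = complex_of_real (beta_moment 0 g) * hyp2f1 1 a (a + b + g) x"
  using assms by (intro beta_moment_series_eq_hyp2f1 integral_resolvent_sums)

lemma integral_resolvent_binomial:
  assumes ab: "a + b = 1" and x: "norm x < 1"
  shows "(\<integral>\<omega>. 1 / (1 - x * complex_of_real (phi \<omega>)) \<partial>M) = (1 - x) powr complex_of_real (- a)"
proof -
  have "(\<integral>\<omega>. 1 / (1 - x * complex_of_real (phi \<omega>)) \<partial>M)
      = (\<integral>\<omega>. complex_of_real ((1 - phi \<omega>) powr 0) / (1 - x * complex_of_real (phi \<omega>)) \<partial>M)"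
  proof (rule integral_cong_AE)
    show "AE \<omega> in M. 1 / (1 - x * complex_of_real (phi \<omega>))
        = complex_of_real ((1 - phi \<omega>) powr 0) / (1 - x * complex_of_real (phi \<omega>))"
      using AE_phi_in_unit_interval by eventually_elim simp
  qed measurable
  also have "\<dots> = hyp2f1 1 a 1 x"
    using integral_resolvent_hyp2f1[of 0 x] x ab Beta_shape_pos by (simp add: beta_moment_def)
  finally show ?thesis
    using hyp2f1_one_a_one[OF x] by simp
qed

lemma integral_resolvent_cond_exp:
  fixes psi :: "'a \<Rightarrow> real"
  assumes [measurable]: "psi \<in> borel_measurable M" and psi: "integrable M psi"
    and cond: "AE \<omega> in M. real_cond_exp M (vimage_algebra (space M) phi borel) psi \<omega>
                 = (1 - phi \<omega>) powr g"
    and x: "norm x < 1"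
  shows "(\<integral>\<omega>. complex_of_real (psi \<omega>) / (1 - x * complex_of_real (phi \<omega>)) \<partial>M)
       = (\<integral>\<omega>. complex_of_real ((1 - phi \<omega>) powr g) / (1 - x * complex_of_real (phi \<omega>)) \<partial>M)"
proof -
  have "AE \<omega> in M. norm (1 / (1 - x * complex_of_real (phi \<omega>))) \<le> 1 / (1 - norm x)"
    using AE_phi_in_unit_interval by eventually_elim (use norm_resolvent_le[OF x] in auto)
  from integral_mult_cond_exp_vimage_complex[OF _ _ _ _ psi cond this]
  show ?thesis
    by (simp add: divide_inverse)
qed

lemma integrable_one_minus_phi_powr:
  assumes "0 \<le> g"
  shows "integrable M (\<lambda>\<omega>. (1 - phi \<omega>) powr g)"
proof (rule integrable_const_bound[where B = 1])
  show "AE \<omega> in M. norm ((1 - phi \<omega>) powr g) \<le> 1"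
    using AE_phi_in_unit_interval by eventually_elim (use assms in \<open>simp add: powr_le1\<close>)
qed measurable

lemma beta_moment_partial_sums_le:
  assumes g: "1 < g"
  shows "(\<Sum>k<n. beta_moment k g) \<le> (\<integral>\<omega>. (1 - phi \<omega>) powr (g - 1) \<partial>M)"
proof -
  have int: "integrable M (\<lambda>\<omega>. phi \<omega> ^ k * (1 - phi \<omega>) powr g)" for k
  proof (rule integrable_const_bound[where B = 1])
    show "AE \<omega> in M. norm (phi \<omega> ^ k * (1 - phi \<omega>) powr g) \<le> 1"
      using AE_phi_in_unit_interval
      by eventually_elim (use g in \<open>auto simp: abs_mult power_le_one powr_le1 intro!: mult_le_one\<close>)
  qed measurable
  have "(\<Sum>k<n. beta_moment k g) = (\<integral>\<omega>. (\<Sum>k<n. phi \<omega> ^ k * (1 - phi \<omega>) powr g) \<partial>M)"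
    using integral_beta_moment[of g] shape_pos g int by simp
  also have "\<dots> \<le> (\<integral>\<omega>. (1 - phi \<omega>) powr (g - 1) \<partial>M)"
  proof (rule integral_mono_AE')
    show "AE \<omega> in M. (\<Sum>k<n. phi \<omega> ^ k * (1 - phi \<omega>) powr g) \<le> (1 - phi \<omega>) powr (g - 1)"
      using AE_phi_in_unit_interval
    proof eventually_elim
      case (elim \<omega>)
      define p where "p = phi \<omega>"
      have p: "0 < p" "p < 1"
        using elim by (auto simp: p_def)
      have "(\<Sum>k<n. p ^ k * (1 - p) powr g) = (1 - p ^ n) / (1 - p) * (1 - p) powr g"
        using p by (simp add: sum_distrib_right[symmetric] sum_gp_strict)
      also have "\<dots> \<le> 1 / (1 - p) * (1 - p) powr g"
        using p by (intro mult_right_mono divide_right_mono) auto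
      also have "\<dots> = (1 - p) powr (g - 1)"
        using p by (simp add: powr_diff)
      finally show ?case
        by (simp add: p_def)
    qed
    show "integrable M (\<lambda>\<omega>. (1 - phi \<omega>) powr (g - 1))"
      using g by (intro integrable_one_minus_phi_powr) simp
  qed simp
  finally show ?thesis .
qed

lemma summable_beta_moment:
  assumes g: "1 < g"
  shows "summable (\<lambda>k. beta_moment k g)"
  using beta_moment_pos[of g] shape_pos g beta_moment_partial_sums_le[OF g]
  by (intro summableI_nonneg_bounded) (auto intro: less_imp_le)

lemma suminf_beta_moment_less_one:
  assumes g: "1 < g"
  shows "(\<Sum>k. beta_moment k g) < 1"
proof -
  have "(\<Sum>k. beta_moment k g) \<le> (\<integral>\<omega>. (1 - phi \<omega>) powr (g - 1) \<partial>M)"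
    by (rule suminf_le_const[OF summable_beta_moment[OF g] beta_moment_partial_sums_le[OF g]])
  also have "\<dots> < 1"
  proof (rule expectation_less)
    show "AE \<omega> in M. (1 - phi \<omega>) powr (g - 1) < 1"
      using AE_phi_in_unit_interval
      by eventually_elim (use g powr_less_mono2[of "g - 1" _ 1] in auto)
  qed (use g in \<open>simp add: integrable_one_minus_phi_powr\<close>)
  finally show ?thesis .
qed

lemma beta_moment_sums_hyp2f1:
  assumes g: "1 < g" and z: "norm z \<le> 1"
  shows "(\<lambda>k. complex_of_real (beta_moment k g) * z ^ k) sums
      (complex_of_real (beta_moment 0 g) * hyp2f1 1 a (a + b + g) z)"
proof -
  have "norm (complex_of_real (beta_moment k g) * z ^ k) \<le> beta_moment k g" for k
    using beta_moment_pos[of g k] shape_pos g z by (simp add: norm_mult norm_power mult_left_le power_le_one)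
  then have "summable (\<lambda>k. complex_of_real (beta_moment k g) * z ^ k)"
    by (intro summable_norm_cancel[of "\<lambda>k. complex_of_real (beta_moment k g) * z ^ k"]
        summable_comparison_test[OF _ summable_beta_moment[OF g]]) auto
  then have "(\<lambda>k. complex_of_real (beta_moment k g) * z ^ k) sums
      (\<Sum>k. complex_of_real (beta_moment k g) * z ^ k)"
    by (rule summable_sums)
  moreover from this have "(\<Sum>k. complex_of_real (beta_moment k g) * z ^ k)
      = complex_of_real (beta_moment 0 g) * hyp2f1 1 a (a + b + g) z"
    using g by (intro beta_moment_series_eq_hyp2f1) simp_all
  ultimately show ?thesis
    by simp
qed

lemma beta_moment_zero_complementary:
  assumes ab: "a + b = 1" and g: "0 < b + g"
  shows "beta_moment 0 g = Gamma (b + g) / (Gamma b * Gamma (1 + g))"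
proof -
  have "a + (b + g) = 1 + g" "0 < 1 + g"
    using ab g shape_pos by simp_all
  moreover have "0 < Gamma a" "0 < Gamma b" "0 < Gamma (b + g)" "0 < Gamma (1 + g)"
    using shape_pos g \<open>0 < 1 + g\<close> by simp_all
  ultimately show ?thesis
    using ab by (simp add: beta_moment_def Beta_def field_simps add.assoc[symmetric])
qed

end

section \<open>Fourier integrals over \<open>[-pi, pi]\<close>\<close>

lemma set_integral_exp_int_frequency:
  "(LINT l:{-pi..pi}|lborel. exp (\<i> * of_int m * complex_of_real l)) = (if m = 0 then 2 * pi else 0)"
proof -
  define f where "f l = exp (\<i> * of_int m * complex_of_real l)" for l
  have "set_integrable lborel {-pi..pi} f"
    unfolding set_integrable_def f_def
    by (rule borel_integrable_compact) (auto intro!: continuous_intros)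
  then have eq: "(LINT l:{-pi..pi}|lborel. f l) = integral {-pi..pi} f"
    by (rule set_borel_integral_eq_integral)
  show ?thesis
  proof (cases "m = 0")
    case True
    then have "f = (\<lambda>l. 1)"
      by (simp add: f_def fun_eq_iff)
    then show ?thesis
      using eq True by (simp add: content_real scaleR_conv_of_real)
  next
    case False
    define F where "F w = exp (\<i> * of_int m * w) / (\<i> * of_int m)" for w :: complex
    have "(f has_integral (F (of_real pi) - F (of_real (-pi)))) {-pi..pi}"
    proof (rule fundamental_theorem_of_calculus)
      fix x assume "x \<in> {-pi..pi}"
      have "(F has_field_derivative exp (\<i> * of_int m * w)) (at w)" for w
        unfolding F_def using False by (auto intro!: derivative_eq_intros)
      then show "((\<lambda>x. F (of_real x)) has_vector_derivative f x) (at x within {-pi..pi})"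
        unfolding f_def by (rule has_vector_derivative_real_field)
    qed simp
    moreover have "F (of_real pi) = F (of_real (-pi))"
    proof -
      have "exp (\<i> * of_int m * complex_of_real pi)
          = exp (\<i> * of_int m * complex_of_real (-pi)) * exp ((2 * of_int m * pi) * \<i>)"
        by (simp only: exp_add[symmetric]) (simp add: algebra_simps)
      also have "exp ((2 * of_int m * pi) * \<i>) = 1"
        by (rule exp_integer_2pi) simp
      finally show ?thesis
        by (simp add: F_def)
    qed
    ultimately show ?thesis
      using eq False by (simp add: f_def integral_unique)
  qed
qed

lemma set_integral_suminf_Icc:
  fixes g :: "nat \<Rightarrow> real \<Rightarrow> complex" and w :: "nat \<Rightarrow> real"
  assumes [measurable]: "\<And>k. g k \<in> borel_measurable borel"
    and bound: "\<And>k l. norm (g k l) \<le> w k" and w: "summable w"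
  shows "(LINT l:{s..t}|lborel. (\<Sum>k. g k l)) = (\<Sum>k. LINT l:{s..t}|lborel. g k l)"
proof -
  define f where "f k l = indicator {s..t} l *\<^sub>R g k l" for k l
  have [measurable]: "f k \<in> borel_measurable lborel" for k
    unfolding f_def by measurable
  have w_integrable: "integrable lborel (\<lambda>l. indicator {s..t} l * w k)" for k
  proof -
    have "integrable lborel (\<lambda>l. indicator {s..t} l *\<^sub>R w k)"
      by (rule borel_integrable_compact[OF compact_Icc continuous_on_const])
    then show ?thesis
      by (simp only: real_scaleR_def)
  qed
  have w_nonneg: "0 \<le> w k" for k
    using bound[of k 0] norm_ge_zero order_trans by blast
  have f_bound: "norm (f k l) \<le> indicator {s..t} l * w k" for k l
    using bound[of k l] by (auto simp: f_def indicator_def)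
  have f_integrable: "integrable lborel (f k)" for k
    using f_bound w_nonneg
    by (intro Bochner_Integration.integrable_bound[OF w_integrable] AE_I2) (auto simp: abs_mult)
  have "AE l in lborel. summable (\<lambda>k. norm (f k l))"
  proof (rule AE_I2)
    fix l
    show "summable (\<lambda>k. norm (f k l))"
      using f_bound by (intro summable_comparison_test[OF _ summable_mult[OF w, of "indicator {s..t} l"]]) auto
  qed
  moreover have "summable (\<lambda>k. \<integral>l. norm (f k l) \<partial>lborel)"
  proof (rule summable_comparison_test[OF _ summable_mult2[OF w, of "measure lborel {s..t}"]])
    have "(\<integral>l. norm (f k l) \<partial>lborel) \<le> (\<integral>l. indicator {s..t} l * w k \<partial>lborel)" for k
      by (rule integral_mono[OF integrable_norm[OF f_integrable] w_integrable f_bound])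
    then show "\<exists>N. \<forall>k\<ge>N. norm (\<integral>l. norm (f k l) \<partial>lborel) \<le> w k * measure lborel {s..t}"
      by (simp add: mult.commute)
  qed
  ultimately have "(\<integral>l. (\<Sum>k. f k l) \<partial>lborel) = (\<Sum>k. integral\<^sup>L lborel (f k))"
    by (rule integral_suminf[OF f_integrable])
  moreover have "(\<Sum>k. f k l) = indicator {s..t} l *\<^sub>R (\<Sum>k. g k l)" for l
    by (simp add: f_def indicator_def)
  ultimately show ?thesis
    unfolding set_lebesgue_integral_def f_def by simp
qed

lemma set_integral_exp_mult_fourier_series:
  fixes c :: "nat \<Rightarrow> real"
  assumes c: "summable (\<lambda>k. \<bar>c k\<bar>)"
  shows "(LINT l:{-pi..pi}|lborel. exp (\<i> * of_int m * complex_of_real l)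
            * (\<Sum>k. complex_of_real (c k) * exp (\<i> * of_nat k * complex_of_real l)))
         = (if m \<le> 0 then complex_of_real (2 * pi * c (nat (- m))) else 0)"
proof -
  define g where "g k l = complex_of_real (c k) * exp (\<i> * of_int (m + int k) * complex_of_real l)" for k l
  have norm_g: "norm (g k l) = \<bar>c k\<bar>" for k l
    by (simp add: g_def norm_mult)
  have "(\<lambda>k. exp (\<i> * of_int m * complex_of_real l) * (complex_of_real (c k) * exp (\<i> * of_nat k * complex_of_real l)))
      = (\<lambda>k. g k l)" for l
  proof
    fix k
    have "\<i> * of_int (m + int k) * complex_of_real l = \<i> * of_int m * complex_of_real l + \<i> * of_nat k * complex_of_real l"
      by (simp add: algebra_simps)
    then show "exp (\<i> * of_int m * complex_of_real l) * (complex_of_real (c k) * exp (\<i> * of_nat k * complex_of_real l)) = g k l"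
      unfolding g_def by (simp only: exp_add mult_ac)
  qed
  moreover have "summable (\<lambda>k. complex_of_real (c k) * exp (\<i> * of_nat k * complex_of_real l))" for l
    using c by (intro summable_norm_cancel[of "\<lambda>k. complex_of_real (c k) * _ k"]) (simp add: norm_mult)
  ultimately have "exp (\<i> * of_int m * complex_of_real l)
      * (\<Sum>k. complex_of_real (c k) * exp (\<i> * of_nat k * complex_of_real l)) = (\<Sum>k. g k l)" for l
    by (simp flip: suminf_mult)
  then have "(LINT l:{-pi..pi}|lborel. exp (\<i> * of_int m * complex_of_real l)
            * (\<Sum>k. complex_of_real (c k) * exp (\<i> * of_nat k * complex_of_real l)))
      = (LINT l:{-pi..pi}|lborel. (\<Sum>k. g k l))"
    by simp
  also have "\<dots> = (\<Sum>k. LINT l:{-pi..pi}|lborel. g k l)"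
  proof (rule set_integral_suminf_Icc[OF _ _ c])
    show "g k \<in> borel_measurable borel" for k
      unfolding g_def by measurable
  qed (simp add: norm_g)
  also have "(\<lambda>k. LINT l:{-pi..pi}|lborel. g k l)
      = (\<lambda>k. if k = nat (- m) \<and> m \<le> 0 then complex_of_real (2 * pi * c k) else 0)"
  proof
    fix k
    have "(LINT l:{-pi..pi}|lborel. g k l)
        = complex_of_real (c k) * (LINT l:{-pi..pi}|lborel. exp (\<i> * of_int (m + int k) * complex_of_real l))"
      unfolding g_def by (simp add: set_lebesgue_integral_def)
    also have "\<dots> = (if k = nat (- m) \<and> m \<le> 0 then complex_of_real (2 * pi * c k) else 0)"
      unfolding set_integral_exp_int_frequency by auto
    finally show "(LINT l:{-pi..pi}|lborel. g k l)
        = (if k = nat (- m) \<and> m \<le> 0 then complex_of_real (2 * pi * c k) else 0)" .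
  qed
  also have "(\<Sum>k. if k = nat (- m) \<and> m \<le> 0 then complex_of_real (2 * pi * c k) else 0)
      = (if m \<le> 0 then complex_of_real (2 * pi * c (nat (- m))) else 0)"
    using sums_single[of "nat (- m)" "\<lambda>k. complex_of_real (2 * pi * c k)"]
    by (cases "m \<le> 0") (simp_all add: sums_iff)
  finally show ?thesis .
qed

lemma suminf_lag_products:
  fixes c :: "nat \<Rightarrow> real" and h :: int
  assumes c: "summable (\<lambda>k. \<bar>c k\<bar>)"
  shows "(\<Sum>j. if h \<le> int j then c j * c (nat (int j - h)) else 0) = (\<Sum>k. c k * c (k + nat \<bar>h\<bar>))"
proof -
  have "\<bar>c k\<bar> \<le> (\<Sum>k. \<bar>c k\<bar>)" for k
    using sum_le_suminf[OF c, of "{k}"] by simp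
  then have lag: "summable (\<lambda>k. c k * c (k + nat \<bar>h\<bar>))"
    by (intro summable_comparison_test[OF _ summable_mult2[OF c, of "\<Sum>k. \<bar>c k\<bar>"]])
       (auto simp: abs_mult intro!: mult_left_mono)
  show ?thesis
  proof (cases "0 \<le> h")
    case True
    define n where "n = nat h"
    have "(\<lambda>j. if h \<le> int (j + n) then c (j + n) * c (nat (int (j + n) - h)) else 0)
        = (\<lambda>k. c k * c (k + nat \<bar>h\<bar>))"
      using True by (auto simp: fun_eq_iff n_def mult.commute)
    then have "(\<lambda>j. if h \<le> int j then c j * c (nat (int j - h)) else 0) sums (\<Sum>k. c k * c (k + nat \<bar>h\<bar>))"
      using summable_sums[OF lag] True by (subst sums_zero_iff_shift[of n, symmetric]) (auto simp: n_def)
    then show ?thesis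
      by (simp add: sums_iff)
  next
    case False
    then have "nat (int j - h) = j + nat \<bar>h\<bar>" for j
      by simp
    then have "(\<lambda>j. if h \<le> int j then c j * c (nat (int j - h)) else 0) = (\<lambda>k. c k * c (k + nat \<bar>h\<bar>))"
      using False by (auto simp: fun_eq_iff)
    then show ?thesis
      by simp
  qed
qed

lemma exp_mult_norm_power_series_sq_sums:
  fixes c :: "nat \<Rightarrow> real" and h :: int
  assumes c: "summable (\<lambda>k. \<bar>c k\<bar>)"
  shows "(\<lambda>j. complex_of_real (c j) * (exp (\<i> * of_int (h - int j) * complex_of_real l)
            * (\<Sum>k. complex_of_real (c k) * exp (\<i> * of_nat k * complex_of_real l))))
         sums (exp (\<i> * of_int h * complex_of_real l)
            * complex_of_real ((norm (\<Sum>k. complex_of_real (c k) * exp (- \<i> * complex_of_real l) ^ k))\<^sup>2))"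
proof -
  define S where "S = (\<Sum>k. complex_of_real (c k) * exp (- \<i> * complex_of_real l) ^ k)"
  define T where "T = (\<Sum>k. complex_of_real (c k) * exp (\<i> * of_nat k * complex_of_real l))"
  have exp_power: "exp (- \<i> * complex_of_real l) ^ k = exp (\<i> * of_int (- int k) * complex_of_real l)" for k
    by (simp add: exp_of_nat_mult[symmetric] algebra_simps)
  have S_sums: "(\<lambda>k. complex_of_real (c k) * exp (\<i> * of_int (- int k) * complex_of_real l)) sums S"
    unfolding S_def exp_power
    using c by (intro summable_sums summable_norm_cancel[of "\<lambda>k. complex_of_real (c k) * _ k"]) (simp add: norm_mult)
  have T_sums: "(\<lambda>k. complex_of_real (c k) * exp (\<i> * of_nat k * complex_of_real l)) sums T"
    unfolding T_def
    using c by (intro summable_sums summable_norm_cancel[of "\<lambda>k. complex_of_real (c k) * _ k"]) (simp add: norm_mult)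
  have "cnj S = T"
    using sums_cnj[THEN iffD2, OF S_sums] T_sums by (simp add: exp_cnj sums_unique2)
  then have norm_sq: "complex_of_real ((norm S)\<^sup>2) = S * T"
    by (simp only: complex_norm_square)
  have shift: "(\<lambda>j. complex_of_real (c j) * exp (\<i> * of_int (- int j) * complex_of_real l)
        * (exp (\<i> * of_int h * complex_of_real l) * T))
      = (\<lambda>j. complex_of_real (c j) * (exp (\<i> * of_int (h - int j) * complex_of_real l) * T))"
    by (simp add: fun_eq_iff mult_ac flip: exp_add) (simp add: algebra_simps)
  have "(\<lambda>j. complex_of_real (c j) * (exp (\<i> * of_int (h - int j) * complex_of_real l) * T))
      sums (S * (exp (\<i> * of_int h * complex_of_real l) * T))"
    using sums_mult2[OF S_sums, of "exp (\<i> * of_int h * complex_of_real l) * T"] by (simp only: shift)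
  then show ?thesis
    unfolding S_def[symmetric] T_def[symmetric] norm_sq by (simp only: mult_ac)
qed

lemma parseval_autocovariance:
  fixes c :: "nat \<Rightarrow> real" and h :: int
  assumes c: "summable (\<lambda>k. \<bar>c k\<bar>)"
  shows "(LINT l:{-pi..pi}|lborel. exp (\<i> * of_int h * complex_of_real l)
            * complex_of_real ((norm (\<Sum>k. complex_of_real (c k) * exp (- \<i> * complex_of_real l) ^ k))\<^sup>2))
         = complex_of_real (2 * pi * (\<Sum>k. c k * c (k + nat \<bar>h\<bar>)))"
proof -
  define A where "A = (\<Sum>k. \<bar>c k\<bar>)"
  define T where "T l = (\<Sum>k. complex_of_real (c k) * exp (\<i> * of_nat k * complex_of_real l))" for l
  define g where "g j l = complex_of_real (c j) * (exp (\<i> * of_int (h - int j) * complex_of_real l) * T l)" for j l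
  have norm_T: "norm (T l) \<le> A" for l
  proof -
    have "norm (T l) \<le> (\<Sum>k. norm (complex_of_real (c k) * exp (\<i> * of_nat k * complex_of_real l)))"
      unfolding T_def by (rule summable_norm) (use c in \<open>simp add: norm_mult\<close>)
    then show ?thesis
      by (simp add: A_def norm_mult)
  qed
  have [measurable]: "T \<in> borel_measurable borel"
    unfolding T_def by measurable
  have "(LINT l:{-pi..pi}|lborel. exp (\<i> * of_int h * complex_of_real l)
            * complex_of_real ((norm (\<Sum>k. complex_of_real (c k) * exp (- \<i> * complex_of_real l) ^ k))\<^sup>2))
      = (LINT l:{-pi..pi}|lborel. (\<Sum>j. g j l))"
    using exp_mult_norm_power_series_sq_sums[OF c, of h] by (simp add: g_def T_def sums_iff)
  also have "\<dots> = (\<Sum>j. LINT l:{-pi..pi}|lborel. g j l)"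
  proof (rule set_integral_suminf_Icc)
    show "g j \<in> borel_measurable borel" for j
      unfolding g_def by measurable
    show "norm (g j l) \<le> \<bar>c j\<bar> * A" for j l
      using norm_T[of l] by (simp add: g_def norm_mult mult_left_mono)
  qed (rule summable_mult2[OF c])
  also have "(\<lambda>j. LINT l:{-pi..pi}|lborel. g j l)
      = (\<lambda>j. complex_of_real (2 * pi * (if h \<le> int j then c j * c (nat (int j - h)) else 0)))"
  proof
    fix j
    have "(LINT l:{-pi..pi}|lborel. g j l)
        = complex_of_real (c j) * (LINT l:{-pi..pi}|lborel. exp (\<i> * of_int (h - int j) * complex_of_real l) * T l)"
      unfolding g_def by (simp add: set_lebesgue_integral_def)
    then show "(LINT l:{-pi..pi}|lborel. g j l)
        = complex_of_real (2 * pi * (if h \<le> int j then c j * c (nat (int j - h)) else 0))"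
      unfolding T_def set_integral_exp_mult_fourier_series[OF c] by simp
  qed
  also have "(\<Sum>j. complex_of_real (2 * pi * (if h \<le> int j then c j * c (nat (int j - h)) else 0)))
      = complex_of_real (2 * pi * (\<Sum>k. c k * c (k + nat \<bar>h\<bar>)))"
  proof -
    have c_le: "\<bar>c k\<bar> \<le> A" for k
      using sum_le_suminf[OF c, of "{k}"] by (simp add: A_def)
    then have "0 \<le> A"
      using abs_ge_zero order_trans by blast
    with c_le have "summable (\<lambda>j. if h \<le> int j then c j * c (nat (int j - h)) else 0)"
      by (intro summable_comparison_test[OF _ summable_mult2[OF c, of A]])
         (auto simp: abs_mult intro!: mult_left_mono)
    then show ?thesis
      by (simp add: suminf_of_real suminf_mult suminf_lag_products[OF c, symmetric])
  qed
  finally show ?thesis .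
qed

lemma one_minus_cos_ge_sq:
  fixes x :: real
  assumes x: "\<bar>x\<bar> \<le> pi"
  shows "x\<^sup>2 / 12 \<le> 1 - cos x"
proof -
  have "y\<^sup>2 / 12 \<le> 1 - cos y" if y: "0 < y" "y \<le> pi" for y :: real
  proof -
    obtain t where t: "cos y = (\<Sum>m<4. cos_coeff m * y ^ m) + cos (t + 1/2 * real 4 * pi) / fact 4 * y ^ 4"
      using Maclaurin_cos_expansion2[of y 4] y by auto
    have "cos_coeff 0 = 1" "cos_coeff 1 = 0" "cos_coeff 2 = -1/2" "cos_coeff 3 = 0"
      by (simp_all add: cos_coeff_def)
    then have "(\<Sum>m<4. cos_coeff m * y ^ m) = 1 - y\<^sup>2 / 2"
      by (simp add: eval_nat_numeral)
    moreover have "cos (t + 1/2 * real 4 * pi) * y ^ 4 \<le> 1 * y ^ 4"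
      by (rule mult_right_mono) simp_all
    then have "cos (t + 1/2 * real 4 * pi) / fact 4 * y ^ 4 \<le> y\<^sup>2 * y\<^sup>2 / 24"
      by (simp add: fact_numeral power2_eq_square eval_nat_numeral)
    moreover have "y\<^sup>2 \<le> 10"
    proof -
      have "y\<^sup>2 \<le> pi\<^sup>2"
        using y by (intro power_mono) auto
      also have "\<dots> \<le> 3.15\<^sup>2"
        using pi_approx by (intro power_mono) auto
      finally show ?thesis
        by (simp add: power2_eq_square)
    qed
    then have "y\<^sup>2 * y\<^sup>2 / 24 \<le> y\<^sup>2 * 10 / 24"
      by (intro divide_right_mono mult_left_mono) auto
    ultimately show ?thesis
      using t by linarith
  qed
  from this[of "\<bar>x\<bar>"] x show ?thesis
    by (cases "x = 0") simp_all
qed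

lemma abs_le_4_norm_one_minus_scaled_exp:
  fixes r l :: real
  assumes r: "1/2 \<le> r" "r \<le> 1" and l: "\<bar>l\<bar> \<le> pi"
  shows "\<bar>l\<bar> \<le> 4 * norm (1 - complex_of_real r * exp (- \<i> * complex_of_real l))"
proof -
  have "(norm (1 - complex_of_real r * exp (- \<i> * complex_of_real l)))\<^sup>2 = (1 - r * cos l)\<^sup>2 + (r * sin l)\<^sup>2"
    by (simp add: cmod_power2 Re_exp Im_exp)
  also have "\<dots> = 1 - 2 * r * cos l + r\<^sup>2 * ((sin l)\<^sup>2 + (cos l)\<^sup>2)"
    by algebra
  also have "\<dots> = 1 - 2 * r * cos l + r\<^sup>2"
    by simp
  also have "\<dots> \<ge> 1 - cos l"
  proof -
    have "(2 * r - 1) * cos l \<le> (2 * r - 1) * 1"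
      using r by (intro mult_left_mono) auto
    then show ?thesis
      using zero_le_power2[of "r - 1"] by (simp add: power2_eq_square algebra_simps)
  qed
  finally have "l\<^sup>2 \<le> 16 * (norm (1 - complex_of_real r * exp (- \<i> * complex_of_real l)))\<^sup>2"
    using one_minus_cos_ge_sq[OF l] zero_le_power2[of "norm (1 - complex_of_real r * exp (- \<i> * complex_of_real l))"]
    by linarith
  then show ?thesis
    using abs_le_square_iff[of l "4 * norm (1 - complex_of_real r * exp (- \<i> * complex_of_real l))"]
    by (simp add: power_mult_distrib)
qed

lemma set_integrable_abs_powr:
  fixes p :: real
  assumes p: "-1 < p"
  shows "set_integrable lborel {-pi..pi} (\<lambda>l. \<bar>l\<bar> powr p)"
proof -
  have h1: "((\<lambda>x. x powr p) has_integral (pi powr (p+1) / (p+1))) {0..pi}"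
    by (rule has_integral_powr_from_0) (use p in auto)
  have h1': "((\<lambda>x. \<bar>x\<bar> powr p) has_integral (pi powr (p+1) / (p+1))) {0..pi}"
    by (rule has_integral_spike_finite[OF finite.emptyI _ h1]) auto
  have h2: "((\<lambda>x. \<bar>x\<bar> powr p) has_integral (pi powr (p+1) / (p+1))) {-pi..0}"
  proof -
    have "((\<lambda>x. \<bar>-x\<bar> powr p) has_integral (pi powr (p+1) / (p+1))) {-pi..-0}"
      using h1' by (subst has_integral_reflect_real) simp
    then show ?thesis by simp
  qed
  have "((\<lambda>x. \<bar>x\<bar> powr p) has_integral (pi powr (p+1) / (p+1) + pi powr (p+1) / (p+1))) {-pi..pi}"
    by (rule has_integral_combine[OF _ _ h2 h1']) auto
  then have "(\<lambda>x. \<bar>x\<bar> powr p) integrable_on {-pi..pi}" by blast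
  then have "(\<lambda>x. \<bar>x\<bar> powr p) absolutely_integrable_on {-pi..pi}"
    by (subst absolutely_integrable_on_iff_nonneg) auto
  then show ?thesis
    unfolding set_integrable_def
    by (subst (asm) integrable_completion) auto
qed

lemma lag_products_abel_tendsto:
  fixes c :: "nat \<Rightarrow> real" and r :: "nat \<Rightarrow> real"
  assumes c: "summable (\<lambda>k. (c k)\<^sup>2)" and r: "r \<longlonglongrightarrow> 1" "\<And>n. r n \<in> {0..1}"
  shows "(\<lambda>n. \<Sum>k. (c k * r n ^ k) * (c (k + H) * r n ^ (k + H))) \<longlonglongrightarrow> (\<Sum>k. c k * c (k + H))"
proof -
  define f where "f \<rho> = (\<Sum>k. c k * c (k + H) * \<rho> ^ (2 * k + H))" for \<rho> :: real
  have dominated: "norm (c k * c (k + H) * \<rho> ^ (2 * k + H)) \<le> ((c k)\<^sup>2 + (c (k + H))\<^sup>2) / 2"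
    if "\<rho> \<in> {0..1}" for k \<rho>
  proof -
    have "\<bar>\<rho> ^ (2 * k + H)\<bar> \<le> 1"
      using that by (auto simp: power_le_one abs_le_iff)
    then have "\<bar>c k * c (k + H)\<bar> * \<bar>\<rho> ^ (2 * k + H)\<bar> \<le> \<bar>c k\<bar> * \<bar>c (k + H)\<bar>"
      by (simp add: abs_mult mult_left_le)
    also have "\<dots> \<le> ((c k)\<^sup>2 + (c (k + H))\<^sup>2) / 2"
      using sum_squares_bound[of "\<bar>c k\<bar>" "\<bar>c (k + H)\<bar>"] by simp
    finally show ?thesis
      by (simp add: abs_mult)
  qed
  have "summable (\<lambda>k. ((c k)\<^sup>2 + (c (k + H))\<^sup>2) / 2)"
    using c by (intro summable_divide summable_add) (simp_all add: summable_iff_shift[of "\<lambda>k. (c k)\<^sup>2" H])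
  then have uniform: "uniform_limit {0..1} (\<lambda>n \<rho>. \<Sum>k<n. c k * c (k + H) * \<rho> ^ (2 * k + H)) f sequentially"
    unfolding f_def using dominated by (rule Weierstrass_m_test[rotated])
  have "continuous_on {0..1} f"
    by (rule uniform_limit_theorem[OF _ uniform]) (auto intro!: always_eventually continuous_intros)
  then have "(\<lambda>n. f (r n)) \<longlonglongrightarrow> f 1"
    using r by (intro continuous_on_tendsto_compose[OF _ r(1)]) auto
  moreover have "(c k * \<rho> ^ k) * (c (k + H) * \<rho> ^ (k + H)) = c k * c (k + H) * \<rho> ^ (2 * k + H)" for k \<rho>
    unfolding mult_2 power_add by (simp only: mult_ac)
  ultimately show ?thesis
    by (simp only: f_def mult_1_right power_one)
qed

section \<open>Spectral density of a fractionally integrated autoregressive filter\<close>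

text \<open>
  In the aggregated model \<open>a k = E[phi^k psi]\<close>, so that \<open>D z = z E[psi / (1 - z phi)]\<close>, and
  \<open>b\<close> are the moving-average coefficients of the limit process.
\<close>

locale fractional_ar_filter =
  fixes a b :: "nat \<Rightarrow> real" and \<alpha> :: real and D :: "complex \<Rightarrow> complex"
  assumes memory: "-1/2 < \<alpha>" "\<alpha> \<le> 0"
    and ar_nonneg: "\<And>k. 0 \<le> a k" and ar_summable: "summable a" and ar_sum_less_one: "suminf a < 1"
    and D_sums: "\<And>z. norm z \<le> 1 \<Longrightarrow> (\<lambda>k. complex_of_real (a k) * z ^ Suc k) sums D z"
    and b_sums: "\<And>z. norm z < 1 \<Longrightarrow>
      (\<lambda>k. complex_of_real (b k) * z ^ k) sums ((1 - z) powr complex_of_real \<alpha> / (1 - D z))"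
begin

lemma norm_ar_term_le:
  assumes "norm z \<le> 1"
  shows "norm (complex_of_real (a k) * z ^ Suc k) \<le> a k"
proof -
  have "norm (complex_of_real (a k) * z ^ Suc k) = a k * norm z ^ Suc k"
    using ar_nonneg[of k] by (simp add: norm_mult norm_power)
  also have "\<dots> \<le> a k"
    using assms ar_nonneg[of k] by (intro mult_left_le power_le_one) auto
  finally show ?thesis .
qed

definition \<delta> :: real where "\<delta> = 1 - suminf a"

lemma \<delta>_pos: "0 < \<delta>"
  using ar_sum_less_one by (simp add: \<delta>_def)

lemma \<delta>_le_norm_one_minus_D:
  assumes z: "norm z \<le> 1"
  shows "\<delta> \<le> norm (1 - D z)"
proof -
  have summable: "summable (\<lambda>k. norm (complex_of_real (a k) * z ^ Suc k))"
    using norm_ar_term_le[OF z] by (intro summable_comparison_test[OF _ ar_summable]) auto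
  have "norm (D z) \<le> (\<Sum>k. norm (complex_of_real (a k) * z ^ Suc k))"
    using summable_norm[OF summable] D_sums[OF z] by (simp add: sums_iff)
  also have "\<dots> \<le> suminf a"
    by (rule suminf_le[OF norm_ar_term_le[OF z] summable ar_summable])
  finally show ?thesis
    using norm_triangle_ineq2[of 1 "D z"] by (simp add: \<delta>_def)
qed

lemma continuous_on_D: "continuous_on (cball 0 1) D"
proof -
  have uniform: "uniform_limit (cball 0 1) (\<lambda>n z. \<Sum>k<n. complex_of_real (a k) * z ^ Suc k)
      (\<lambda>z. \<Sum>k. complex_of_real (a k) * z ^ Suc k) sequentially"
    using norm_ar_term_le by (intro Weierstrass_m_test[OF _ ar_summable]) auto
  have "continuous_on (cball 0 1) (\<lambda>z. \<Sum>k. complex_of_real (a k) * z ^ Suc k)"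
    by (rule uniform_limit_theorem[OF _ uniform]) (auto intro!: always_eventually continuous_intros)
  moreover have "(\<Sum>k. complex_of_real (a k) * z ^ Suc k) = D z" if "z \<in> cball 0 1" for z
    using D_sums[of z] that by (simp add: sums_iff)
  ultimately show ?thesis
    using continuous_on_cong[OF refl, of "cball 0 1" "\<lambda>z. \<Sum>k. complex_of_real (a k) * z ^ Suc k" D] by simp
qed

lemma measurable_D_exp [measurable]: "(\<lambda>l. D (exp (- \<i> * complex_of_real l))) \<in> borel_measurable borel"
  by (intro borel_measurable_continuous_onI continuous_on_compose2[OF continuous_on_D])
     (auto intro!: continuous_intros)

definition spectral_shape :: "complex \<Rightarrow> real" where
  "spectral_shape z = norm (1 - z) powr (2 * \<alpha>) / (norm (1 - D z))\<^sup>2"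

definition shape_majorant :: "real \<Rightarrow> real" where
  "shape_majorant l = (\<bar>l\<bar> / 4) powr (2 * \<alpha>) / \<delta>\<^sup>2"

lemma measurable_spectral_shape_exp [measurable]:
  "(\<lambda>l. spectral_shape (exp (- \<i> * complex_of_real l))) \<in> borel_measurable borel"
  unfolding spectral_shape_def by measurable

lemma spectral_shape_le_majorant:
  assumes r: "1/2 \<le> r" "r \<le> 1" and l: "\<bar>l\<bar> \<le> pi" "l \<noteq> 0"
  shows "spectral_shape (complex_of_real r * exp (- \<i> * complex_of_real l)) \<le> shape_majorant l"
proof -
  define z where "z = complex_of_real r * exp (- \<i> * complex_of_real l)"
  have "norm (1 - z) powr (2 * \<alpha>) \<le> (\<bar>l\<bar> / 4) powr (2 * \<alpha>)"
    using abs_le_4_norm_one_minus_scaled_exp[OF r l(1)] memory l(2)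
    by (intro powr_mono2') (auto simp: z_def)
  moreover have "\<delta>\<^sup>2 \<le> (norm (1 - D z))\<^sup>2"
    using \<delta>_le_norm_one_minus_D[of z] \<delta>_pos r by (intro power_mono) (auto simp: z_def norm_mult)
  ultimately have "spectral_shape z \<le> shape_majorant l"
    unfolding spectral_shape_def shape_majorant_def using \<delta>_pos by (intro frac_le) auto
  then show ?thesis
    by (simp add: z_def)
qed

lemma set_integrable_shape_majorant: "set_integrable lborel {-pi..pi} shape_majorant"
proof -
  have "set_integrable lborel {-pi..pi} (\<lambda>l. 1 / (4 powr (2 * \<alpha>) * \<delta>\<^sup>2) * \<bar>l\<bar> powr (2 * \<alpha>))"
    using memory by (intro set_integrable_mult_right set_integrable_abs_powr) simp
  moreover have "shape_majorant = (\<lambda>l. 1 / (4 powr (2 * \<alpha>) * \<delta>\<^sup>2) * \<bar>l\<bar> powr (2 * \<alpha>))"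
    by (simp add: fun_eq_iff shape_majorant_def powr_divide)
  ultimately show ?thesis
    by simp
qed

lemma set_integrable_dominated:
  fixes f :: "real \<Rightarrow> real"
  assumes [measurable]: "f \<in> borel_measurable borel"
    and bound: "\<And>l. \<bar>l\<bar> \<le> pi \<Longrightarrow> l \<noteq> 0 \<Longrightarrow> \<bar>f l\<bar> \<le> shape_majorant l"
  shows "set_integrable lborel {-pi..pi} f"
proof (rule set_integrable_bound[OF set_integrable_shape_majorant])
  show "AE l in lborel. l \<in> {-pi..pi} \<longrightarrow> norm (f l) \<le> norm (shape_majorant l)"
    using AE_lborel_singleton[of 0]
    by eventually_elim (use bound \<delta>_pos in \<open>auto simp: shape_majorant_def\<close>)
qed (simp add: set_borel_measurable_def)

definition radius :: "nat \<Rightarrow> real" where "radius n = 1 - 1 / (real n + 2)"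

lemma radius_bounds: "1/2 \<le> radius n" "radius n < 1"
  by (auto simp: radius_def field_simps)

lemma radius_tendsto_one: "radius \<longlonglongrightarrow> 1"
proof -
  have "(\<lambda>n. 1 / (real (n + 2))) \<longlonglongrightarrow> 0"
    by (rule LIMSEQ_ignore_initial_segment[OF lim_1_over_n])
  then have "(\<lambda>n. 1 - 1 / (real (n + 2))) \<longlonglongrightarrow> 1 - 0"
    by (intro tendsto_intros)
  then show ?thesis
    by (simp add: radius_def[abs_def] add.commute)
qed

lemma summable_abs_b_scaled:
  assumes r: "0 \<le> r" "r < 1"
  shows "summable (\<lambda>k. \<bar>b k * r ^ k\<bar>)"
proof -
  have "norm (complex_of_real r) < norm (complex_of_real ((1 + r) / 2))"
    "norm (complex_of_real ((1 + r) / 2)) < 1"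
    using r by (simp_all only: norm_of_real) simp_all
  then have "summable (\<lambda>k. complex_of_real (b k) * complex_of_real ((1 + r) / 2) ^ k)"
    using sums_summable[OF b_sums] by blast
  then have "summable (\<lambda>k. norm (complex_of_real (b k) * complex_of_real r ^ k))"
    by (rule powser_insidea[OF _ \<open>norm (complex_of_real r) < _\<close>])
  then show ?thesis
    by (simp add: norm_mult norm_power abs_mult power_abs)
qed

definition transfer :: "real \<Rightarrow> real \<Rightarrow> complex" where
  "transfer r l = (\<Sum>k. complex_of_real (b k * r ^ k) * exp (- \<i> * complex_of_real l) ^ k)"

lemma measurable_transfer [measurable]: "transfer r \<in> borel_measurable borel"
  unfolding transfer_def[abs_def] by measurable

lemma norm_transfer_sq:
  assumes r: "0 \<le> r" "r < 1"
  shows "(norm (transfer r l))\<^sup>2 = spectral_shape (complex_of_real r * exp (- \<i> * complex_of_real l))"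
proof -
  define z where "z = complex_of_real r * exp (- \<i> * complex_of_real l)"
  have z: "norm z < 1"
    using r by (simp add: z_def norm_mult)
  have "transfer r l = (1 - z) powr complex_of_real \<alpha> / (1 - D z)"
    using b_sums[OF z] by (simp add: transfer_def z_def sums_iff power_mult_distrib mult_ac)
  moreover have "(norm ((1 - z) powr complex_of_real \<alpha>))\<^sup>2 = norm (1 - z) powr (2 * \<alpha>)"
    by (simp add: norm_powr_real_powr' power2_eq_square flip: powr_add)
  ultimately show ?thesis
    by (simp add: spectral_shape_def norm_divide power_divide z_def)
qed

lemma parseval_transfer:
  assumes r: "0 \<le> r" "r < 1"
  shows "(LINT l:{-pi..pi}|lborel. exp (\<i> * of_int h * complex_of_real l) * complex_of_real ((norm (transfer r l))\<^sup>2))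
     = complex_of_real (2 * pi * (\<Sum>k. (b k * r ^ k) * (b (k + nat \<bar>h\<bar>) * r ^ (k + nat \<bar>h\<bar>))))"
  unfolding transfer_def by (rule parseval_autocovariance[OF summable_abs_b_scaled[OF r]])

lemma summable_b_sq: "summable (\<lambda>k. (b k)\<^sup>2)"
proof (rule summableI_nonneg_bounded)
  fix N
  define I where "I = (LINT l:{-pi..pi}|lborel. shape_majorant l)"
  have bound: "(\<Sum>k<N. (b k * r ^ k)\<^sup>2) \<le> I / (2 * pi)" if r: "1/2 \<le> r" "r < 1" for r
  proof -
    have "(\<lambda>l. exp (\<i> * of_int 0 * complex_of_real l) * complex_of_real ((norm (transfer r l))\<^sup>2))
        = (\<lambda>l. complex_of_real ((norm (transfer r l))\<^sup>2))"
      by simp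
    then have "complex_of_real (LINT l:{-pi..pi}|lborel. (norm (transfer r l))\<^sup>2)
        = complex_of_real (2 * pi * (\<Sum>k. (b k * r ^ k) * (b (k + nat \<bar>0\<bar>) * r ^ (k + nat \<bar>0\<bar>))))"
      using parseval_transfer[of r 0] r by (simp only: set_integral_complex_of_real)
    then have "2 * pi * (\<Sum>k. (b k * r ^ k)\<^sup>2) = (LINT l:{-pi..pi}|lborel. (norm (transfer r l))\<^sup>2)"
      by (simp only: of_real_eq_iff) (simp add: power2_eq_square)
    also have "\<dots> \<le> I"
      unfolding I_def
    proof (rule set_integral_mono_AE[OF set_integrable_dominated set_integrable_shape_majorant])
      show bound: "\<bar>(norm (transfer r l))\<^sup>2\<bar> \<le> shape_majorant l" if "\<bar>l\<bar> \<le> pi" "l \<noteq> 0" for l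
        using spectral_shape_le_majorant[of r l] norm_transfer_sq[of r l] that r by (simp add: spectral_shape_def)
      show "AE l\<in>{-pi..pi} in lborel. (norm (transfer r l))\<^sup>2 \<le> shape_majorant l"
        using AE_lborel_singleton[of 0] by eventually_elim (use bound in \<open>auto simp: abs_le_iff\<close>)
    qed measurable
    finally have "(\<Sum>k. (b k * r ^ k)\<^sup>2) \<le> I / (2 * pi)"
      by (simp add: field_simps)
    moreover have summable: "summable (\<lambda>k. (b k * r ^ k)\<^sup>2)"
    proof -
      have abs: "summable (\<lambda>k. \<bar>b k * r ^ k\<bar>)"
        using summable_abs_b_scaled r by simp
      have "\<bar>b k * r ^ k\<bar> \<le> (\<Sum>k. \<bar>b k * r ^ k\<bar>)" for k
        using sum_le_suminf[OF abs, of "{k}"] by simp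
      then show ?thesis
        by (intro summable_comparison_test[OF _ summable_mult2[OF abs, of "\<Sum>k. \<bar>b k * r ^ k\<bar>"]])
           (auto simp: power2_eq_square abs_mult intro!: mult_left_mono)
    qed
    moreover have "(\<Sum>k<N. (b k * r ^ k)\<^sup>2) \<le> (\<Sum>k. (b k * r ^ k)\<^sup>2)"
      by (rule sum_le_suminf[OF summable]) simp_all
    ultimately show ?thesis
      by linarith
  qed
  have "(\<lambda>n. \<Sum>k<N. (b k * radius n ^ k)\<^sup>2) \<longlonglongrightarrow> (\<Sum>k<N. (b k * 1 ^ k)\<^sup>2)"
    by (intro tendsto_sum tendsto_power tendsto_mult tendsto_const radius_tendsto_one)
  then have "(\<Sum>k<N. (b k * 1 ^ k)\<^sup>2) \<le> I / (2 * pi)"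
    by (rule LIMSEQ_le_const2) (use bound[OF radius_bounds] in blast)
  then show "(\<Sum>k<N. (b k)\<^sup>2) \<le> I / (2 * pi)"
    by simp
qed simp

lemma spectral_shape_radius_tendsto:
  assumes l: "\<bar>l\<bar> \<le> pi" "l \<noteq> 0"
  shows "(\<lambda>n. spectral_shape (complex_of_real (radius n) * exp (- \<i> * complex_of_real l)))
      \<longlonglongrightarrow> spectral_shape (exp (- \<i> * complex_of_real l))"
proof -
  define z where "z n = complex_of_real (radius n) * exp (- \<i> * complex_of_real l)" for n
  have z: "z \<longlonglongrightarrow> exp (- \<i> * complex_of_real l)"
    using tendsto_mult_right[OF tendsto_of_real[OF radius_tendsto_one], of "exp (- \<i> * complex_of_real l)"]
    by (simp add: z_def[abs_def])
  have "z n \<in> cball 0 1" for n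
    using radius_bounds[of n] by (simp add: z_def norm_mult)
  then have "(\<lambda>n. D (z n)) \<longlonglongrightarrow> D (exp (- \<i> * complex_of_real l))"
    by (intro continuous_on_tendsto_compose[OF continuous_on_D z] always_eventually) auto
  moreover have "norm (1 - exp (- \<i> * complex_of_real l)) \<noteq> 0"
    using abs_le_4_norm_one_minus_scaled_exp[of 1 l] l by auto
  moreover have "(norm (1 - D (exp (- \<i> * complex_of_real l))))\<^sup>2 \<noteq> 0"
    using \<delta>_le_norm_one_minus_D[of "exp (- \<i> * complex_of_real l)"] \<delta>_pos by auto
  ultimately show ?thesis
    unfolding spectral_shape_def z_def[symmetric]
    by (intro tendsto_divide tendsto_powr tendsto_norm tendsto_diff tendsto_power tendsto_const z)
qed

lemma set_integral_spectral_shape: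
  "(LINT l:{-pi..pi}|lborel. exp (\<i> * of_int h * complex_of_real l)
      * complex_of_real (spectral_shape (exp (- \<i> * complex_of_real l))))
   = complex_of_real (2 * pi * (\<Sum>k. b k * b (k + nat \<bar>h\<bar>)))"
proof (rule LIMSEQ_unique)
  let ?e = "\<lambda>l. exp (\<i> * of_int h * complex_of_real l)"
  have r: "0 \<le> radius n" "radius n < 1" for n
    using radius_bounds[of n] by simp_all
  show "(\<lambda>n. LINT l:{-pi..pi}|lborel. ?e l * complex_of_real ((norm (transfer (radius n) l))\<^sup>2))
      \<longlonglongrightarrow> (LINT l:{-pi..pi}|lborel. ?e l * complex_of_real (spectral_shape (exp (- \<i> * complex_of_real l))))"
    unfolding set_lebesgue_integral_def
  proof (rule integral_dominated_convergence[where w = "\<lambda>l. indicator {-pi..pi} l *\<^sub>R shape_majorant l"])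
    show "integrable lborel (\<lambda>l. indicator {-pi..pi} l *\<^sub>R shape_majorant l)"
      using set_integrable_shape_majorant by (simp add: set_integrable_def)
    show "AE l in lborel. (\<lambda>n. indicator {-pi..pi} l *\<^sub>R (?e l * complex_of_real ((norm (transfer (radius n) l))\<^sup>2)))
      \<longlonglongrightarrow> indicator {-pi..pi} l *\<^sub>R (?e l * complex_of_real (spectral_shape (exp (- \<i> * complex_of_real l))))"
      using AE_lborel_singleton[of 0]
    proof eventually_elim
      case (elim l)
      show ?case
      proof (cases "l \<in> {-pi..pi}")
        case True
        then have "(\<lambda>n. (norm (transfer (radius n) l))\<^sup>2) \<longlonglongrightarrow> spectral_shape (exp (- \<i> * complex_of_real l))"
          using spectral_shape_radius_tendsto[OF _ elim] by (simp add: norm_transfer_sq[OF r] abs_le_iff)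
        from tendsto_mult_left[OF tendsto_of_real[OF this], of "?e l"] True
        show ?thesis
          by simp
      qed simp
    qed
    show "AE l in lborel. norm (indicator {-pi..pi} l *\<^sub>R (?e l * complex_of_real ((norm (transfer (radius n) l))\<^sup>2)))
          \<le> indicator {-pi..pi} l *\<^sub>R shape_majorant l" for n
      using AE_lborel_singleton[of 0]
    proof eventually_elim
      case (elim l)
      have "(norm (transfer (radius n) l))\<^sup>2 \<le> shape_majorant l" if "\<bar>l\<bar> \<le> pi"
        using spectral_shape_le_majorant[of "radius n" l] radius_bounds[of n] that elim
        by (simp add: norm_transfer_sq[OF r])
      then show ?case
        by (auto simp: indicator_def norm_mult norm_power abs_le_iff)
    qed
  qed measurable
  have "(\<lambda>n. complex_of_real (2 * pi * (\<Sum>k. (b k * radius n ^ k) * (b (k + nat \<bar>h\<bar>) * radius n ^ (k + nat \<bar>h\<bar>)))))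
      \<longlonglongrightarrow> complex_of_real (2 * pi * (\<Sum>k. b k * b (k + nat \<bar>h\<bar>)))"
    using r by (intro tendsto_intros lag_products_abel_tendsto[OF summable_b_sq radius_tendsto_one])
      (auto intro: less_imp_le)
  then show "(\<lambda>n. LINT l:{-pi..pi}|lborel. ?e l * complex_of_real ((norm (transfer (radius n) l))\<^sup>2))
      \<longlonglongrightarrow> complex_of_real (2 * pi * (\<Sum>k. b k * b (k + nat \<bar>h\<bar>)))"
    by (simp only: parseval_transfer[OF r])
qed

theorem is_spectral_density_ma_autocov:
  "is_spectral_density (ma_autocov m s2 b)
     (\<lambda>l. m\<^sup>2 * s2 / (2 * pi) * (norm (1 - exp (- \<i> * complex_of_real l)) powr (2 * \<alpha>)
          / (norm (1 - D (exp (- \<i> * complex_of_real l))))\<^sup>2))"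
proof -
  have "set_integrable lborel {-pi..pi} (\<lambda>l. spectral_shape (exp (- \<i> * complex_of_real l)))"
  proof (rule set_integrable_dominated)
    show "\<bar>spectral_shape (exp (- \<i> * complex_of_real l))\<bar> \<le> shape_majorant l"
      if "\<bar>l\<bar> \<le> pi" "l \<noteq> 0" for l
      using spectral_shape_le_majorant[of 1 l] that by (simp add: spectral_shape_def)
  qed (rule measurable_spectral_shape_exp)
  moreover have "complex_of_real (ma_autocov m s2 b h)
      = (LINT l:{-pi..pi}|lborel. exp (\<i> * of_int h * complex_of_real l)
          * complex_of_real (m\<^sup>2 * s2 / (2 * pi) * spectral_shape (exp (- \<i> * complex_of_real l))))" for h
  proof -
    have "(LINT l:{-pi..pi}|lborel. exp (\<i> * of_int h * complex_of_real l)
          * complex_of_real (m\<^sup>2 * s2 / (2 * pi) * spectral_shape (exp (- \<i> * complex_of_real l))))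
        = (LINT l:{-pi..pi}|lborel. complex_of_real (m\<^sup>2 * s2 / (2 * pi))
          * (exp (\<i> * of_int h * complex_of_real l) * complex_of_real (spectral_shape (exp (- \<i> * complex_of_real l)))))"
      by (simp add: mult_ac)
    also have "\<dots> = complex_of_real (m\<^sup>2 * s2 / (2 * pi)) * complex_of_real (2 * pi * (\<Sum>k. b k * b (k + nat \<bar>h\<bar>)))"
      by (simp only: set_integral_mult_right set_integral_spectral_shape)
    finally show ?thesis
      by (simp add: ma_autocov_def)
  qed
  ultimately show ?thesis
    unfolding is_spectral_density_def spectral_shape_def[symmetric]
    by (auto intro: set_integrable_mult_right)
qed

end

theorem mainTheorem3:
  fixes M :: "'a measure" and phi psi c :: "'a \<Rightarrow> real"
    and \<alpha> \<beta> \<sigma>2 :: real and bt :: "nat \<Rightarrow> real"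
  defines "K \<equiv> Gamma (1 + \<alpha> + \<beta>) / (Gamma (1 + \<alpha>) * Gamma (1 + \<beta>))"
  assumes M: "prob_space M"
    and \<alpha>: "-1/2 < \<alpha>" "\<alpha> < 0" and \<beta>: "1 < \<beta>"
    and meas: "phi \<in> borel_measurable M" "psi \<in> borel_measurable M" "c \<in> borel_measurable M"
    and phi_beta: "distributed M lborel phi (\<lambda>t. ennreal (beta_density (-\<alpha>) (1 + \<alpha>) t))"
    and psi_int: "integrable M psi"
    and cond: "AE \<omega> in M. real_cond_exp M (vimage_algebra (space M) phi borel) psi \<omega>
                 = (1 - phi \<omega>) powr \<beta>"
    and c_pos: "AE \<omega> in M. 0 < c \<omega>" and c_int: "integrable M c"
    and c_indep: "prob_space.indep_set M (sets (vimage_algebra (space M) c borel))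
                 (sets (vimage_algebra (space M) (\<lambda>\<omega>. (phi \<omega>, psi \<omega>)) (borel \<Otimes>\<^sub>M borel)))"
    and \<sigma>2: "0 < \<sigma>2"
    and bt: "\<And>x::complex. norm x < 1 \<Longrightarrow>
       (\<lambda>k. complex_of_real (bt k) * x ^ k) sums
         ((integral\<^sup>L M (\<lambda>\<omega>. 1 / (1 - x * complex_of_real (phi \<omega>))))
          / (1 - x * integral\<^sup>L M (\<lambda>\<omega>. complex_of_real (psi \<omega>) / (1 - x * complex_of_real (phi \<omega>)))))"
  shows "(\<forall>x::complex. norm x < 1 \<longrightarrow>
            integral\<^sup>L M (\<lambda>\<omega>. 1 / (1 - x * complex_of_real (phi \<omega>))) = (1 - x) powr complex_of_real \<alpha>)
       \<and> (\<forall>x::complex. norm x < 1 \<longrightarrow>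
            integral\<^sup>L M (\<lambda>\<omega>. complex_of_real ((1 - phi \<omega>) powr \<beta>) / (1 - x * complex_of_real (phi \<omega>)))
              = complex_of_real K * hyp2f1 1 (-\<alpha>) (1 + \<beta>) x)
       \<and> (\<forall>x::complex. norm x < 1 \<longrightarrow>
            (\<lambda>k. complex_of_real (bt k) * x ^ k) sums
              ((1 - x) powr complex_of_real \<alpha> / (1 - complex_of_real K * x * hyp2f1 1 (-\<alpha>) (1 + \<beta>) x)))
       \<and> is_spectral_density (ma_autocov (integral\<^sup>L M c) \<sigma>2 bt)
           (\<lambda>l. (integral\<^sup>L M c)\<^sup>2 * \<sigma>2 / (2 * pi)
                * (norm (1 - exp (- \<i> * complex_of_real l)) powr (2 * \<alpha>)
                   / (norm (1 - complex_of_real K * exp (- \<i> * complex_of_real l)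
                          * hyp2f1 1 (-\<alpha>) (1 + \<beta>) (exp (- \<i> * complex_of_real l))))\<^sup>2))"
proof -
  interpret beta: beta_variable M phi "- \<alpha>" "1 + \<alpha>"
    using \<alpha> meas(1) phi_beta by (intro beta_variable.intro[OF M] beta_variable_axioms.intro) auto
  have K_eq: "beta.beta_moment 0 \<beta> = K"
    using beta.beta_moment_zero_complementary[of \<beta>] \<alpha> \<beta> by (simp add: K_def add.assoc)
  have resolvent: "(\<integral>\<omega>. 1 / (1 - x * complex_of_real (phi \<omega>)) \<partial>M) = (1 - x) powr complex_of_real \<alpha>"
    if "norm x < 1" for x
    using beta.integral_resolvent_binomial[OF _ that] by simp
  have weighted_resolvent: "(\<integral>\<omega>. complex_of_real ((1 - phi \<omega>) powr \<beta>) / (1 - x * complex_of_real (phi \<omega>)) \<partial>M)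
      = complex_of_real K * hyp2f1 1 (-\<alpha>) (1 + \<beta>) x" if "norm x < 1" for x
    using beta.integral_resolvent_hyp2f1[OF _ that, of \<beta>] \<beta> K_eq by simp
  have bt_generating: "(\<lambda>k. complex_of_real (bt k) * x ^ k) sums
      ((1 - x) powr complex_of_real \<alpha> / (1 - complex_of_real K * x * hyp2f1 1 (-\<alpha>) (1 + \<beta>) x))"
    if "norm x < 1" for x
    using bt[OF that] beta.integral_resolvent_cond_exp[OF meas(2) psi_int cond that] resolvent[OF that] weighted_resolvent[OF that]
    by (simp add: mult.assoc mult.left_commute)
  interpret filter: fractional_ar_filter "\<lambda>k. beta.beta_moment k \<beta>" bt \<alpha>
    "\<lambda>z. complex_of_real K * z * hyp2f1 1 (-\<alpha>) (1 + \<beta>) z"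
  proof
    show "(\<lambda>k. complex_of_real (beta.beta_moment k \<beta>) * z ^ Suc k) sums
        (complex_of_real K * z * hyp2f1 1 (-\<alpha>) (1 + \<beta>) z)" if "norm z \<le> 1" for z
      using sums_mult[OF beta.beta_moment_sums_hyp2f1[OF \<beta> that], of z] K_eq
      by (simp add: mult_ac)
  qed (use \<alpha> \<beta> bt_generating beta.beta_moment_pos beta.summable_beta_moment beta.suminf_beta_moment_less_one
       in \<open>auto intro: less_imp_le\<close>)
  show ?thesis
    using resolvent weighted_resolvent bt_generating filter.is_spectral_density_ma_autocov by blast
qed

end
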